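(* Let $G$ be a DCG containing a cycle $C=(v_1,\dots,v_k)$ of distinct vertices, $k\ge 2$ (edges $v_i\to v_{i+1}$, indices mod $k$). Let $H=\textsc{Reverse}(G,C)$. Then $H$ is Markov equivalent to $G$.
   Context: A DCG is a directed graph without self-loops (cycles and 2-cycles allowed). $\mathrm{Pa}_G(v)$ is the set of $u$ with $u\to v$ in $G$. $\textsc{Reverse}(G,C)$ is the DCG on the same vertex set with edge set $$\{v_{i+1}\to v_i : 1\le i\le k\}\ \cup\ \{a\to b\in E(G): b\notin C\}\ \cup\ \{w\to v_{i-1} : 1\le i\le k,\ w\in \mathrm{Pa}_G(v_i)\setminus\{v_{i-1}\}\},$$ i.e. the cycle is reversed, and each other incoming edge $w\to v_i$ of a cycle vertex is replaced by $w\to v_{i-1}$ (indices mod $k$); edges into vertices outside $C$ are kept. d-separation: a path between $a\neq b$ is a sequence of vertices (repeats allowed) with a specified directed edge (either direction) between consecutive vertices; an internal vertex is a collider if both adjacent path-edges point into it; $x$ is a descendant of $v$ if $x=v$ or there is a directed path from $v$ to $x$; the path is active given $Z\subseteq V\setminus\{a,b\}$ if every internal non-collider is outside $Z$ and every collider is in $Z$ or has a descendant in $Z$; $a,b$ are d-separated given $Z$ if no active path exists. Two graphs on the same vertex set are Markov equivalent if they have the same d-separation statements. *)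

theory Defs
  imports Main
begin

definition dcg :: "'a set \<Rightarrow> ('a \<times> 'a) set \<Rightarrow> bool" where
  "dcg V E \<longleftrightarrow> finite V \<and> E \<subseteq> V \<times> V \<and> (\<forall>v. (v, v) \<notin> E)"

definition parents :: "('a \<times> 'a) set \<Rightarrow> 'a \<Rightarrow> 'a set" where
  "parents E v = {u. (u, v) \<in> E}"

definition is_cycle :: "'a set \<Rightarrow> ('a \<times> 'a) set \<Rightarrow> 'a list \<Rightarrow> bool" where
  "is_cycle V E C \<longleftrightarrow> length C \<ge> 2 \<and> distinct C \<and> set C \<subseteq> V \<and>
     (\<forall>i < length C. (C ! i, C ! ((i + 1) mod length C)) \<in> E)"

definition reverse_cycle :: "('a \<times> 'a) set \<Rightarrow> 'a list \<Rightarrow> ('a \<times> 'a) set" where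
  "reverse_cycle E C =
     (let k = length C in
       {(C ! ((i + 1) mod k), C ! i) | i. i < k}
     \<union> {(a, b). (a, b) \<in> E \<and> b \<notin> set C}
     \<union> {(w, C ! ((i + k - 1) mod k)) | i w. i < k \<and> w \<in> parents E (C ! i) - {C ! ((i + k - 1) mod k)}})"

text \<open>A path is a vertex list xs (repeats allowed) together with a list ds of edge
  specifications: ds ! i = True means the edge xs!i -> xs!(i+1), False means xs!(i+1) -> xs!i.\<close>
definition is_path :: "('a \<times> 'a) set \<Rightarrow> 'a \<Rightarrow> 'a \<Rightarrow> 'a list \<Rightarrow> bool list \<Rightarrow> bool" where
  "is_path E a b xs ds \<longleftrightarrow> length xs \<ge> 2 \<and> length ds = length xs - 1 \<and>
     hd xs = a \<and> last xs = b \<and>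
     (\<forall>i < length ds. (if ds ! i then (xs ! i, xs ! (i + 1)) \<in> E
                                 else (xs ! (i + 1), xs ! i) \<in> E))"

definition is_collider :: "bool list \<Rightarrow> nat \<Rightarrow> bool" where
  "is_collider ds i \<longleftrightarrow> ds ! (i - 1) \<and> \<not> ds ! i"

definition descendant :: "('a \<times> 'a) set \<Rightarrow> 'a \<Rightarrow> 'a \<Rightarrow> bool" where
  "descendant E v x \<longleftrightarrow> (v, x) \<in> E\<^sup>*"

definition active_path :: "('a \<times> 'a) set \<Rightarrow> 'a set \<Rightarrow> 'a list \<Rightarrow> bool list \<Rightarrow> bool" where
  "active_path E Z xs ds \<longleftrightarrow>
     (\<forall>i. 0 < i \<and> i < length xs - 1 \<longrightarrow>
        (if is_collider ds i then (\<exists>z \<in> Z. descendant E (xs ! i) z)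
         else xs ! i \<notin> Z))"

definition d_separated :: "('a \<times> 'a) set \<Rightarrow> 'a \<Rightarrow> 'a \<Rightarrow> 'a set \<Rightarrow> bool" where
  "d_separated E a b Z \<longleftrightarrow> \<not> (\<exists>xs ds. is_path E a b xs ds \<and> active_path E Z xs ds)"

definition markov_equivalent :: "'a set \<Rightarrow> ('a \<times> 'a) set \<Rightarrow> ('a \<times> 'a) set \<Rightarrow> bool" where
  "markov_equivalent V E1 E2 \<longleftrightarrow>
     (\<forall>a \<in> V. \<forall>b \<in> V. \<forall>Z. a \<noteq> b \<and> Z \<subseteq> V - {a, b} \<longrightarrow>
        (d_separated E1 a b Z \<longleftrightarrow> d_separated E2 a b Z))"

end

theory Submission
  imports Defs
begin

text \<open>
  Whether a walk can be continued at a vertex depends only on the vertex and on whether the walk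
  entered it through an arrowhead, so d-connection is reachability among such states. Reversing
  the cycle preserves the ancestral relation, hence the set of ancestors of Z, and since the
  cycle is strongly connected it lies entirely inside or entirely outside that set.
  Outside, every cycle vertex is an open non-collider, and each edge w -> v(i) of G is replaced
  in H by the directed path w -> v(i-1) -> v(i-2) -> ... -> v(i) around the reversed cycle, so
  active walks of G carry over verbatim. Inside, every cycle vertex is an open collider; where a
  walk of G enters v(i) through an arrowhead, its image in H enters v(i-1) instead, from where it
  can leave through every former parent of v(i) and, along the reversed edge v(i) -> v(i-1),
  through v(i) itself. Reversal is an involution, which gives the converse simulation.
\<close>

definition cycle_on :: "('a \<times> 'a) set \<Rightarrow> 'a set \<Rightarrow> ('a \<Rightarrow> 'a) \<Rightarrow> ('a \<Rightarrow> 'a) \<Rightarrow> bool" where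
  "cycle_on E S nx pv \<longleftrightarrow>
     (\<forall>y\<in>S. nx y \<in> S \<and> pv y \<in> S \<and> nx (pv y) = y \<and> pv (nx y) = y \<and> nx y \<noteq> y \<and> (y, nx y) \<in> E) \<and>
     S \<times> S \<subseteq> {(y, nx y) | y. y \<in> S}\<^sup>*"

definition reverse_on :: "('a \<times> 'a) set \<Rightarrow> 'a set \<Rightarrow> ('a \<Rightarrow> 'a) \<Rightarrow> ('a \<times> 'a) set" where
  "reverse_on E S nx =
     {(x, y). if y \<in> S then x = nx y \<or> (x, nx y) \<in> E \<and> x \<noteq> y else (x, y) \<in> E}"

lemma cycle_onD:
  assumes "cycle_on E S nx pv" and "y \<in> S"
  shows "nx y \<in> S" "pv y \<in> S" "nx (pv y) = y" "pv (nx y) = y" "nx y \<noteq> y" "pv y \<noteq> y"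
    and "(y, nx y) \<in> E" "(pv y, y) \<in> E"
  using assms unfolding cycle_on_def by metis+

lemma cycle_on_trancl:
  assumes cyc: "cycle_on E S nx pv" and "y \<in> S" "y' \<in> S" "y \<noteq> y'"
  shows "(y, y') \<in> (E \<inter> S \<times> S)\<^sup>+"
proof -
  have "(y, y') \<in> {(y, nx y) | y. y \<in> S}\<^sup>*"
    using cyc assms(2,3) unfolding cycle_on_def by blast
  moreover have "{(y, nx y) | y. y \<in> S} \<subseteq> E \<inter> S \<times> S"
    using cycle_onD[OF cyc] by auto
  ultimately have "(y, y') \<in> (E \<inter> S \<times> S)\<^sup>*"
    using rtrancl_mono by blast
  with \<open>y \<noteq> y'\<close> show ?thesis
    by (simp add: rtrancl_eq_or_trancl)
qed

lemma cycle_on_rtrancl: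
  assumes "cycle_on E S nx pv" and "y \<in> S" and "y' \<in> S"
  shows "(y, y') \<in> E\<^sup>*"
proof (cases "y = y'")
  case False
  then have "(y, y') \<in> (E \<inter> S \<times> S)\<^sup>+"
    using cycle_on_trancl assms by metis
  then show ?thesis
    by (meson Int_lower1 trancl_into_rtrancl trancl_mono)
qed simp

lemma cycle_on_reverse_on:
  assumes cyc: "cycle_on E S nx pv"
  shows "cycle_on (reverse_on E S nx) S pv nx"
proof -
  have "{(y, pv y) | y. y \<in> S} = {(y, nx y) | y. y \<in> S}\<inverse>"
    using cycle_onD[OF cyc] by force
  then have "S \<times> S \<subseteq> {(y, pv y) | y. y \<in> S}\<^sup>*"
    using cyc unfolding cycle_on_def by (auto simp: rtrancl_converse)
  then show ?thesis
    using cycle_onD[OF cyc] unfolding cycle_on_def reverse_on_def by auto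
qed

lemma reverse_on_reverse_on:
  assumes "cycle_on E S nx pv" and "\<forall>v. (v, v) \<notin> E"
  shows "reverse_on (reverse_on E S nx) S pv = E"
  using assms(2) cycle_onD[OF assms(1)] unfolding reverse_on_def by auto

lemma reverse_on_irrefl:
  assumes "cycle_on E S nx pv" and "\<forall>v. (v, v) \<notin> E"
  shows "\<forall>v. (v, v) \<notin> reverse_on E S nx"
proof (intro allI notI)
  fix v assume "(v, v) \<in> reverse_on E S nx"
  then show False
    using assms cycle_onD(5)[OF assms(1), of v] by (auto simp: reverse_on_def split: if_splits)
qed

lemma reverse_on_memI:
  assumes cyc: "cycle_on E S nx pv"
  shows "y \<in> S \<Longrightarrow> (y, pv y) \<in> reverse_on E S nx"
    and "(x, y) \<in> E \<Longrightarrow> y \<in> S \<Longrightarrow> x \<noteq> y \<Longrightarrow> x \<noteq> pv y \<Longrightarrow> (x, pv y) \<in> reverse_on E S nx"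
    and "(x, y) \<in> E \<Longrightarrow> y \<notin> S \<Longrightarrow> (x, y) \<in> reverse_on E S nx"
  using cycle_onD[OF cyc] by (auto simp: reverse_on_def)

lemma edge_trancl_reverse_on:
  assumes cyc: "cycle_on E S nx pv" and "(x, y) \<in> E" "y \<in> S" "x \<noteq> y"
  shows "(x, y) \<in> (reverse_on E S nx \<inter> UNIV \<times> S)\<^sup>+"
proof -
  let ?H = "reverse_on E S nx"
  have "(pv y, y) \<in> (?H \<inter> S \<times> S)\<^sup>+"
    using cycle_on_trancl[OF cycle_on_reverse_on[OF cyc]] cycle_onD[OF cyc \<open>y \<in> S\<close>] assms(3)
    by metis
  then have path: "(pv y, y) \<in> (?H \<inter> UNIV \<times> S)\<^sup>+"
    by (rule trancl_mono) blast
  show ?thesis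
  proof (cases "x = pv y")
    case False
    then have "(x, pv y) \<in> ?H \<inter> UNIV \<times> S"
      using reverse_on_memI(2)[OF cyc assms(2-4)] cycle_onD(2)[OF cyc \<open>y \<in> S\<close>] by simp
    then show ?thesis
      using path by (rule trancl_into_trancl2)
  qed (use path in simp)
qed

lemma reverse_on_subset_rtrancl:
  assumes cyc: "cycle_on E S nx pv"
  shows "reverse_on E S nx \<subseteq> E\<^sup>*"
proof clarify
  fix x y assume xy: "(x, y) \<in> reverse_on E S nx"
  show "(x, y) \<in> E\<^sup>*"
  proof (cases "y \<in> S")
    case True
    then have "(nx y, y) \<in> E\<^sup>*"
      using cycle_on_rtrancl[OF cyc] cycle_onD(1)[OF cyc] by blast
    with xy True show ?thesis
      unfolding reverse_on_def by (auto intro: converse_rtrancl_into_rtrancl)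
  qed (use xy in \<open>simp add: reverse_on_def\<close>)
qed

lemma rtrancl_reverse_on:
  assumes cyc: "cycle_on E S nx pv" and irrefl: "\<forall>v. (v, v) \<notin> E"
  shows "(reverse_on E S nx)\<^sup>* = E\<^sup>*"
proof
  show "(reverse_on E S nx)\<^sup>* \<subseteq> E\<^sup>*"
    using reverse_on_subset_rtrancl[OF cyc] by (rule rtrancl_subset_rtrancl)
  have "E \<subseteq> (reverse_on E S nx)\<^sup>*"
    using reverse_on_subset_rtrancl[OF cycle_on_reverse_on[OF cyc]]
    by (simp add: reverse_on_reverse_on[OF cyc irrefl])
  then show "E\<^sup>* \<subseteq> (reverse_on E S nx)\<^sup>*"
    by (rule rtrancl_subset_rtrancl)
qed

definition cycle_succ :: "'a list \<Rightarrow> 'a \<Rightarrow> 'a" where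
  "cycle_succ C = the \<circ> map_of (zip C (rotate1 C))"

definition cycle_pred :: "'a list \<Rightarrow> 'a \<Rightarrow> 'a" where
  "cycle_pred C = the \<circ> map_of (zip (rotate1 C) C)"

lemma cycle_succ_nth:
  assumes "distinct C" and "i < length C"
  shows "cycle_succ C (C ! i) = C ! (Suc i mod length C)"
  using assms by (simp add: cycle_succ_def map_of_zip_nth nth_rotate1)

lemma cycle_pred_nth:
  assumes "distinct C" and "i < length C"
  shows "cycle_pred C (C ! (Suc i mod length C)) = C ! i"
  using assms map_of_zip_nth[of "rotate1 C" C i] by (simp add: cycle_pred_def nth_rotate1)

lemma Suc_mod_pred_mod:
  assumes "i < (k::nat)"
  shows "Suc ((i + k - 1) mod k) mod k = i"
  using assms by (simp add: mod_Suc_eq)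

lemma cycle_succ_rtrancl:
  assumes dist: "distinct C" and "i < length C" and "j < length C"
  shows "(C ! i, C ! j) \<in> {(y, cycle_succ C y) | y. y \<in> set C}\<^sup>*"
proof -
  define k where "k = length C"
  let ?R = "{(y, cycle_succ C y) | y. y \<in> set C}"
  have step: "(C ! l, C ! (Suc l mod k)) \<in> ?R" if "l < k" for l
    using that cycle_succ_nth[OF dist] by (auto simp: k_def)
  have up: "(C ! l, C ! m) \<in> ?R\<^sup>*" if "l \<le> m" "m < k" for l m
    using that
  proof (induction m)
    case (Suc m)
    then show ?case
      using step[of m] by (auto simp: le_Suc_eq intro: rtrancl_into_rtrancl)
  qed simp
  have "0 < k"
    using assms(2) unfolding k_def by linarith
  have "(C ! i, C ! (k - 1)) \<in> ?R\<^sup>*"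
    using up assms(2) by (simp add: k_def)
  moreover have "(C ! (k - 1), C ! 0) \<in> ?R"
    using step[of "k - 1"] \<open>0 < k\<close> by simp
  ultimately have "(C ! i, C ! 0) \<in> ?R\<^sup>*"
    by (rule rtrancl_into_rtrancl)
  then show ?thesis
    using up[of 0 j] assms(3) by (simp add: rtrancl_trans k_def)
qed

lemma is_cycle_cycle_on:
  assumes "is_cycle V E C"
  shows "cycle_on E (set C) (cycle_succ C) (cycle_pred C)"
  unfolding cycle_on_def
proof (intro conjI ballI subsetI)
  define k where "k = length C"
  have "2 \<le> k" and dist: "distinct C" and edge: "\<And>i. i < k \<Longrightarrow> (C ! i, C ! (Suc i mod k)) \<in> E"
    using assms by (auto simp: is_cycle_def k_def)
  have succ: "cycle_succ C (C ! i) = C ! (Suc i mod k)" if "i < k" for i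
    using cycle_succ_nth[OF dist] that by (simp add: k_def)
  have pred: "cycle_pred C (C ! (Suc i mod k)) = C ! i" if "i < k" for i
    using cycle_pred_nth[OF dist] that by (simp add: k_def)
  fix y assume "y \<in> set C"
  then obtain i where i: "i < k" "y = C ! i"
    by (auto simp: in_set_conv_nth k_def)
  define j where "j = (i + k - 1) mod k"
  have "Suc j mod k = i"
    unfolding j_def using i(1) by (rule Suc_mod_pred_mod)
  then have j: "j < k" "y = C ! (Suc j mod k)"
    using i by (simp_all add: j_def)
  have "Suc i mod k < k" and "Suc i mod k \<noteq> i"
    using i(1) \<open>2 \<le> k\<close> by (auto simp: mod_Suc)
  then have "C ! (Suc i mod k) \<noteq> C ! i"
    using dist i(1) by (simp add: nth_eq_iff_index_eq k_def)
  have y_succ: "cycle_succ C y = C ! (Suc i mod k)"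
    using succ i by simp
  have y_pred: "cycle_pred C y = C ! j"
    using pred j by simp
  show "cycle_succ C y \<in> set C"
    using y_succ \<open>Suc i mod k < k\<close> by (simp add: k_def)
  show "cycle_pred C y \<in> set C"
    using y_pred j(1) by (simp add: k_def)
  show "cycle_succ C (cycle_pred C y) = y"
    using y_pred succ j by simp
  show "cycle_pred C (cycle_succ C y) = y"
    using y_succ pred i by simp
  show "cycle_succ C y \<noteq> y"
    using y_succ i \<open>C ! (Suc i mod k) \<noteq> C ! i\<close> by simp
  show "(y, cycle_succ C y) \<in> E"
    using y_succ i edge by simp
next
  fix p assume "p \<in> set C \<times> set C"
  then show "p \<in> {(y, cycle_succ C y) | y. y \<in> set C}\<^sup>*"
    using assms cycle_succ_rtrancl by (force simp: is_cycle_def in_set_conv_nth)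
qed

lemma reverse_cycle_eq_reverse_on:
  assumes "is_cycle V E C"
  shows "reverse_cycle E C = reverse_on E (set C) (cycle_succ C)"
proof (intro set_eqI, clarify)
  let ?nx = "cycle_succ C" and ?pv = "cycle_pred C"
  define k where "k = length C"
  have dist: "distinct C" and "0 < k"
    using assms by (auto simp: is_cycle_def k_def)
  have succ: "C ! ((i + 1) mod k) = ?nx (C ! i)" if "i < k" for i
    using cycle_succ_nth[OF dist] that by (simp add: k_def)
  have pred: "C ! ((i + k - 1) mod k) = ?pv (C ! i)" if "i < k" for i
    using cycle_pred_nth[OF dist, of "(i + k - 1) mod k"] Suc_mod_pred_mod[OF that] \<open>0 < k\<close>
    by (simp add: k_def)
  have ex_set_C: "(\<exists>v\<in>set C. P v) \<longleftrightarrow> (\<exists>i<k. P (C ! i))" for P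
    by (metis in_set_conv_nth k_def)
  note cyc = cycle_onD[OF is_cycle_cycle_on[OF assms]]
  fix x y
  have "(x, y) \<in> reverse_cycle E C \<longleftrightarrow>
      (\<exists>i<k. x = C ! ((i + 1) mod k) \<and> y = C ! i) \<or> (x, y) \<in> E \<and> y \<notin> set C \<or>
      (\<exists>i<k. (x, C ! i) \<in> E \<and> x \<noteq> C ! ((i + k - 1) mod k) \<and> y = C ! ((i + k - 1) mod k))"
    unfolding reverse_cycle_def Let_def parents_def k_def by blast
  also have "\<dots> \<longleftrightarrow> (\<exists>v\<in>set C. x = ?nx v \<and> y = v) \<or> (x, y) \<in> E \<and> y \<notin> set C \<or>
      (\<exists>v\<in>set C. (x, v) \<in> E \<and> x \<noteq> ?pv v \<and> y = ?pv v)"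
    unfolding ex_set_C by (simp only: succ pred cong: conj_cong)
  also have "\<dots> \<longleftrightarrow> (x, y) \<in> reverse_on E (set C) ?nx"
    unfolding reverse_on_def using cyc by auto
  finally show "(x, y) \<in> reverse_cycle E C \<longleftrightarrow> (x, y) \<in> reverse_on E (set C) ?nx" .
qed

text \<open>h and m tell whether the edges by which a walk enters and leaves v point into v.\<close>

definition unblocked :: "('a \<times> 'a) set \<Rightarrow> 'a set \<Rightarrow> 'a \<Rightarrow> bool \<Rightarrow> bool \<Rightarrow> bool" where
  "unblocked E Z v h m \<longleftrightarrow> (if h \<and> m then \<exists>z\<in>Z. descendant E v z else v \<notin> Z)"

lemma active_path_iff_unblocked:
  "active_path E Z xs ds \<longleftrightarrow>
     (\<forall>i. 0 < i \<and> i < length xs - 1 \<longrightarrow> unblocked E Z (xs ! i) (ds ! (i - 1)) (\<not> ds ! i))"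
  by (simp add: active_path_def unblocked_def is_collider_def)

lemma unblocked_reverse_on:
  assumes "cycle_on E S nx pv" and "\<forall>v. (v, v) \<notin> E"
  shows "unblocked (reverse_on E S nx) Z = unblocked E Z"
  using rtrancl_reverse_on[OF assms] by (simp add: unblocked_def descendant_def fun_eq_iff)

text \<open>\<open>active_reach E Z a x h\<close>: some walk from a to x is active given Z at all vertices but its
  last, and h tells whether its last edge points into x. The start state counts a as a
  non-collider, which is exactly right when \<open>a \<notin> Z\<close>.\<close>

inductive active_reach :: "('a \<times> 'a) set \<Rightarrow> 'a set \<Rightarrow> 'a \<Rightarrow> 'a \<Rightarrow> bool \<Rightarrow> bool"
  for E Z a where
  start: "active_reach E Z a a False"
| forward: "active_reach E Z a u h \<Longrightarrow> (u, x) \<in> E \<Longrightarrow> unblocked E Z u h False \<Longrightarrow>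
    active_reach E Z a x True"
| backward: "active_reach E Z a u h \<Longrightarrow> (x, u) \<in> E \<Longrightarrow> unblocked E Z u h True \<Longrightarrow>
    active_reach E Z a x False"

lemma active_reach_step:
  assumes "active_reach E Z a u h" and "if d then (u, x) \<in> E else (x, u) \<in> E"
    and "unblocked E Z u h (\<not> d)"
  shows "active_reach E Z a x d"
  using assms by (cases d) (auto intro: active_reach.intros)

lemma active_path_imp_active_reach:
  assumes path: "is_path E a b xs ds" and act: "active_path E Z xs ds" and "a \<notin> Z"
  shows "active_reach E Z a b (last ds)"
proof -
  have len: "2 \<le> length xs" "length ds = length xs - 1"
    and edge: "\<And>i. i < length ds \<Longrightarrow> if ds ! i then (xs ! i, xs ! (i + 1)) \<in> E else (xs ! (i + 1), xs ! i) \<in> E"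
    and ends: "hd xs = a" "last xs = b"
    using path by (auto simp: is_path_def)
  have "xs \<noteq> []" "ds \<noteq> []"
    using len by auto
  have reach: "active_reach E Z a (xs ! j) (0 < j \<and> ds ! (j - 1))" if "j < length xs" for j
    using that
  proof (induction j)
    case 0
    then show ?case
      using ends \<open>xs \<noteq> []\<close> by (simp add: hd_conv_nth active_reach.start)
  next
    case (Suc j)
    have "j < length ds"
      using Suc.prems len by simp
    then have "if ds ! j then (xs ! j, xs ! Suc j) \<in> E else (xs ! Suc j, xs ! j) \<in> E"
      using edge[OF \<open>j < length ds\<close>] by (simp only: Suc_eq_plus1)
    moreover have "unblocked E Z (xs ! j) (0 < j \<and> ds ! (j - 1)) (\<not> ds ! j)"
    proof (cases "j = 0")
      case True
      then show ?thesis
        using ends \<open>xs \<noteq> []\<close> \<open>a \<notin> Z\<close> by (simp add: hd_conv_nth unblocked_def)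
    next
      case False
      then show ?thesis
        using act Suc.prems len by (simp add: active_path_iff_unblocked)
    qed
    moreover have "active_reach E Z a (xs ! j) (0 < j \<and> ds ! (j - 1))"
      using Suc by simp
    ultimately show ?case
      using active_reach_step by fastforce
  qed
  have "xs ! (length xs - 1) = b" "last ds = ds ! (length xs - 1 - 1)"
    using ends len \<open>xs \<noteq> []\<close> \<open>ds \<noteq> []\<close> by (simp_all add: last_conv_nth)
  then show ?thesis
    using reach[of "length xs - 1"] len by simp
qed

lemma active_path_snoc:
  assumes path: "is_path E a u xs ds" and act: "active_path E Z xs ds"
    and edge: "if d then (u, x) \<in> E else (x, u) \<in> E" and "unblocked E Z u (last ds) (\<not> d)"
  shows "is_path E a x (xs @ [x]) (ds @ [d]) \<and> active_path E Z (xs @ [x]) (ds @ [d])"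
proof
  have len: "2 \<le> length xs" "length ds = length xs - 1"
    using path by (auto simp: is_path_def)
  have "xs ! (length xs - 1) = u"
    using path len by (cases xs rule: rev_cases) (auto simp: is_path_def nth_append)
  then show "is_path E a x (xs @ [x]) (ds @ [d])"
    using path edge by (auto simp: is_path_def nth_append less_Suc_eq hd_append)
  show "active_path E Z (xs @ [x]) (ds @ [d])"
    unfolding active_path_iff_unblocked
  proof (intro allI impI)
    fix i assume i: "0 < i \<and> i < length (xs @ [x]) - 1"
    show "unblocked E Z ((xs @ [x]) ! i) ((ds @ [d]) ! (i - 1)) (\<not> (ds @ [d]) ! i)"
    proof (cases "i = length xs - 1")
      case True
      then have "i = length ds" "ds \<noteq> []"
        using len by auto
      then have "(xs @ [x]) ! i = u" "(ds @ [d]) ! (i - 1) = last ds" "(ds @ [d]) ! i = d"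
        using len \<open>xs ! (length xs - 1) = u\<close> by (auto simp: nth_append last_conv_nth)
      then show ?thesis
        using \<open>unblocked E Z u (last ds) (\<not> d)\<close> by simp
    next
      case False
      then have "i < length xs - 1"
        using i by (simp; arith)
      then show ?thesis
        using i len act by (auto simp: nth_append active_path_iff_unblocked)
    qed
  qed
qed

lemma active_walk_extend:
  assumes walk: "u = a \<and> \<not> h \<or> (\<exists>xs ds. is_path E a u xs ds \<and> active_path E Z xs ds \<and> last ds = h)"
    and edge: "if d then (u, x) \<in> E else (x, u) \<in> E" and "unblocked E Z u h (\<not> d)"
  shows "\<exists>xs ds. is_path E a x xs ds \<and> active_path E Z xs ds \<and> last ds = d"
  using walk
proof
  assume "u = a \<and> \<not> h"
  then have "is_path E a x [a, x] [d] \<and> active_path E Z [a, x] [d]"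
    using edge by (auto simp: is_path_def active_path_def)
  then show ?thesis
    by force
next
  assume "\<exists>xs ds. is_path E a u xs ds \<and> active_path E Z xs ds \<and> last ds = h"
  then obtain xs ds where "is_path E a u xs ds" "active_path E Z xs ds" "last ds = h"
    by blast
  then show ?thesis
    using active_path_snoc[OF _ _ edge] \<open>unblocked E Z u h (\<not> d)\<close> by fastforce
qed

lemma active_reach_imp_active_path:
  assumes "active_reach E Z a b h"
  shows "b = a \<and> \<not> h \<or> (\<exists>xs ds. is_path E a b xs ds \<and> active_path E Z xs ds \<and> last ds = h)"
  using assms
proof (induction rule: active_reach.induct)
  case (forward u h x)
  then show ?case
    using active_walk_extend[OF forward.IH, of True x] by simp
next
  case (backward u h x)
  then show ?case
    using active_walk_extend[OF backward.IH, of False x] by simp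
qed simp

lemma d_separated_iff_not_active_reach:
  assumes "a \<noteq> b" and "a \<notin> Z"
  shows "d_separated E a b Z \<longleftrightarrow> \<not> (\<exists>h. active_reach E Z a b h)"
  using active_path_imp_active_reach[OF _ _ \<open>a \<notin> Z\<close>] active_reach_imp_active_path \<open>a \<noteq> b\<close>
  unfolding d_separated_def by metis

lemma active_reach_trancl_forward:
  assumes "(s, t) \<in> (E \<inter> UNIV \<times> W)\<^sup>+" and "W \<inter> Z = {}"
    and "active_reach E Z a s h" and "unblocked E Z s h False"
  shows "active_reach E Z a t True"
  using assms(1)
proof (induction rule: trancl_induct)
  case (base t)
  then show ?case
    using assms(3,4) by (auto intro: active_reach.forward)
next
  case (step y t)
  have "y \<in> W"
    using step.hyps(1) by (auto elim: tranclE)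
  then have "unblocked E Z y True False"
    using assms(2) by (auto simp: unblocked_def)
  then show ?case
    using step by (blast intro: active_reach.forward)
qed

lemma active_reach_trancl_backward:
  assumes "(s, t) \<in> (E \<inter> UNIV \<times> W)\<^sup>+" and "W \<inter> Z = {}"
    and "active_reach E Z a t h" and "unblocked E Z t h True"
  shows "active_reach E Z a s False"
  using assms(1)
proof (induction rule: converse_trancl_induct)
  case (base s)
  then show ?case
    using assms(3,4) by (auto intro: active_reach.backward)
next
  case (step s y)
  then have "unblocked E Z y False True"
    using assms(2) by (auto simp: unblocked_def)
  then show ?case
    using step by (blast intro: active_reach.backward)
qed

lemma active_reach_reverse_on_no_ancestor:
  assumes cyc: "cycle_on E S nx pv" and irrefl: "\<forall>v. (v, v) \<notin> E"
    and no_ancestor: "\<forall>y\<in>S. \<not> (\<exists>z\<in>Z. descendant E y z)"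
    and reach: "active_reach E Z a b h"
  shows "active_reach (reverse_on E S nx) Z a b h"
proof -
  let ?H = "reverse_on E S nx"
  have "S \<inter> Z = {}"
    using no_ancestor by (auto simp: descendant_def)
  have into_S: "(x, y) \<in> (?H \<inter> UNIV \<times> S)\<^sup>+" if "(x, y) \<in> E" "y \<in> S" for x y
    using edge_trancl_reverse_on[OF cyc that] irrefl that(1) by blast
  note ub = unblocked_reverse_on[OF cyc irrefl]
  from reach show ?thesis
  proof (induction rule: active_reach.induct)
    case start
    show ?case
      by (rule active_reach.start)
  next
    case (forward u h x)
    then show ?case
      using active_reach_trancl_forward[OF into_S \<open>S \<inter> Z = {}\<close>] reverse_on_memI(3)[OF cyc] ub
      by (cases "x \<in> S") (auto intro: active_reach.forward)
  next
    case (backward u h x)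
    then show ?case
      using active_reach_trancl_backward[OF into_S \<open>S \<inter> Z = {}\<close>] reverse_on_memI(3)[OF cyc] ub
      by (cases "u \<in> S") (auto intro: active_reach.backward)
  qed
qed

context
  fixes E :: "('a \<times> 'a) set" and S :: "'a set" and nx pv :: "'a \<Rightarrow> 'a" and Z :: "'a set" and a :: 'a
  assumes cyc: "cycle_on E S nx pv" and irrefl: "\<forall>v. (v, v) \<notin> E"
    and all_ancestors: "\<forall>y\<in>S. \<exists>z\<in>Z. descendant E y z"
begin

text \<open>A walk in the reversed graph need not be able to enter a cycle vertex y through an
  arrowhead. The invariant \<open>simulated\<close> replaces such a state by \<open>pred_open y\<close>: the walk reaches
  \<open>pv y\<close> and may leave it along any edge into \<open>pv y\<close>, i.e. along a former parent edge of y or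
  the reversed cycle edge \<open>y \<rightarrow> pv y\<close>.\<close>

definition pred_open :: "'a \<Rightarrow> bool" where
  "pred_open y \<longleftrightarrow> (\<exists>h. active_reach (reverse_on E S nx) Z a (pv y) h \<and> unblocked E Z (pv y) h True)"

lemma unblocked_on_cycle:
  "y \<in> S \<Longrightarrow> unblocked E Z y h m \<longleftrightarrow> h \<and> m \<or> y \<notin> Z"
  using all_ancestors by (auto simp: unblocked_def)

lemma active_reach_if_pred_open:
  assumes "y \<in> S" and "pred_open y"
  shows "active_reach (reverse_on E S nx) Z a y False"
proof -
  obtain h where "active_reach (reverse_on E S nx) Z a (pv y) h" "unblocked E Z (pv y) h True"
    using \<open>pred_open y\<close> by (auto simp: pred_open_def)
  moreover note reverse_on_memI(1)[OF cyc \<open>y \<in> S\<close>]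
  ultimately show ?thesis
    unfolding unblocked_reverse_on[OF cyc irrefl, symmetric] by (blast intro: active_reach.backward)
qed

lemma pred_open_if_active_reach:
  assumes "y \<in> S" and "active_reach (reverse_on E S nx) Z a y h" and "y \<notin> Z"
  shows "pred_open y"
proof -
  have "unblocked (reverse_on E S nx) Z y h False"
    using \<open>y \<notin> Z\<close> by (simp add: unblocked_def)
  then have "active_reach (reverse_on E S nx) Z a (pv y) True"
    by (rule active_reach.forward[OF assms(2) reverse_on_memI(1)[OF cyc \<open>y \<in> S\<close>]])
  moreover have "unblocked E Z (pv y) True True"
    using unblocked_on_cycle cycle_onD(2)[OF cyc \<open>y \<in> S\<close>] by simp
  ultimately show ?thesis
    by (auto simp: pred_open_def)
qed

definition simulated :: "'a \<Rightarrow> bool \<Rightarrow> bool" where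
  "simulated u h \<longleftrightarrow>
     (if u \<in> S then unblocked E Z u h True \<longrightarrow> pred_open u
      else active_reach (reverse_on E S nx) Z a u h)"

lemma simulated_if_active_reach_False:
  assumes "active_reach (reverse_on E S nx) Z a x False"
  shows "simulated x False"
  using assms pred_open_if_active_reach by (simp add: simulated_def unblocked_def)

lemma ex_active_reach_if_simulated:
  assumes "simulated u h" and "u \<notin> Z"
  shows "\<exists>h'. active_reach (reverse_on E S nx) Z a u h'"
  using assms active_reach_if_pred_open unblocked_on_cycle by (cases "u \<in> S") (auto simp: simulated_def)

lemma simulated_forward:
  assumes reach: "active_reach (reverse_on E S nx) Z a u h" and "u \<notin> Z" and "(u, x) \<in> E"
  shows "simulated x True"
proof -
  have open_u: "unblocked (reverse_on E S nx) Z u h False"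
    using \<open>u \<notin> Z\<close> by (simp add: unblocked_def)
  show ?thesis
  proof (cases "x \<in> S")
    case x: True
    show ?thesis
    proof (cases "u = pv x")
      case True
      then show ?thesis
        using x reach \<open>u \<notin> Z\<close> unblocked_on_cycle cycle_onD(2)[OF cyc x]
        by (auto simp: simulated_def pred_open_def)
    next
      case False
      then have "(u, pv x) \<in> reverse_on E S nx"
        using reverse_on_memI(2)[OF cyc \<open>(u, x) \<in> E\<close> x] irrefl \<open>(u, x) \<in> E\<close> by auto
      then have "active_reach (reverse_on E S nx) Z a (pv x) True"
        using reach open_u by (blast intro: active_reach.forward)
      then show ?thesis
        using x unblocked_on_cycle cycle_onD(2)[OF cyc x] by (auto simp: simulated_def pred_open_def)
    qed
  next
    case False
    then show ?thesis
      using reverse_on_memI(3)[OF cyc \<open>(u, x) \<in> E\<close>] reach open_u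
      by (auto simp: simulated_def intro: active_reach.forward)
  qed
qed

lemma simulated_backward:
  assumes "simulated u h" and "(x, u) \<in> E" and "unblocked E Z u h True"
  shows "simulated x False"
proof (cases "u \<in> S")
  case u: True
  then obtain h' where reach: "active_reach (reverse_on E S nx) Z a (pv u) h'"
    and open_pred: "unblocked E Z (pv u) h' True"
    using assms by (auto simp: simulated_def pred_open_def)
  show ?thesis
  proof (cases "x = pv u")
    case True
    then show ?thesis
      using reach u cycle_onD(2)[OF cyc u] pred_open_if_active_reach
      by (auto simp: simulated_def unblocked_def)
  next
    case False
    then have "(x, pv u) \<in> reverse_on E S nx"
      using reverse_on_memI(2)[OF cyc \<open>(x, u) \<in> E\<close> u] irrefl \<open>(x, u) \<in> E\<close> by auto
    then have "active_reach (reverse_on E S nx) Z a x False"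
      using reach open_pred unfolding unblocked_reverse_on[OF cyc irrefl, symmetric]
      by (blast intro: active_reach.backward)
    then show ?thesis
      by (rule simulated_if_active_reach_False)
  qed
next
  case False
  then have "active_reach (reverse_on E S nx) Z a u h" "(x, u) \<in> reverse_on E S nx"
    using assms reverse_on_memI(3)[OF cyc] by (auto simp: simulated_def)
  then have "active_reach (reverse_on E S nx) Z a x False"
    using assms(3) unfolding unblocked_reverse_on[OF cyc irrefl, symmetric]
    by (blast intro: active_reach.backward)
  then show ?thesis
    by (rule simulated_if_active_reach_False)
qed

lemma simulated_if_active_reach:
  assumes "active_reach E Z a u h"
  shows "simulated u h"
  using assms
proof (induction rule: active_reach.induct)
  case start
  show ?case
    by (rule simulated_if_active_reach_False[OF active_reach.start])
next
  case (forward u h x)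
  then have "u \<notin> Z"
    by (simp add: unblocked_def)
  then show ?case
    using ex_active_reach_if_simulated[OF forward.IH] simulated_forward forward.hyps(2) by blast
next
  case (backward u h x)
  then show ?case
    using simulated_backward by blast
qed

lemma active_reach_reverse_on_all_ancestors:
  assumes "active_reach E Z a b h" and "b \<notin> Z"
  shows "\<exists>h'. active_reach (reverse_on E S nx) Z a b h'"
  using ex_active_reach_if_simulated[OF simulated_if_active_reach] assms .

end

lemma active_reach_reverse_on:
  assumes cyc: "cycle_on E S nx pv" and irrefl: "\<forall>v. (v, v) \<notin> E"
    and reach: "active_reach E Z a b h" and "b \<notin> Z"
  shows "\<exists>h'. active_reach (reverse_on E S nx) Z a b h'"
proof (cases "\<forall>y\<in>S. \<exists>z\<in>Z. descendant E y z")
  case True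
  show ?thesis
    by (rule active_reach_reverse_on_all_ancestors[OF cyc irrefl True reach \<open>b \<notin> Z\<close>])
next
  case False
  have "\<forall>y\<in>S. \<not> (\<exists>z\<in>Z. descendant E y z)"
  proof (intro ballI notI)
    fix y assume "y \<in> S" and "\<exists>z\<in>Z. descendant E y z"
    then have "\<exists>z\<in>Z. descendant E y' z" if "y' \<in> S" for y'
      using cycle_on_rtrancl[OF cyc that] unfolding descendant_def by (meson rtrancl_trans)
    with False show False
      by blast
  qed
  then show ?thesis
    using active_reach_reverse_on_no_ancestor[OF cyc irrefl _ reach] by blast
qed

lemma d_separated_reverse_on:
  assumes cyc: "cycle_on E S nx pv" and irrefl: "\<forall>v. (v, v) \<notin> E"
    and "a \<noteq> b" and "a \<notin> Z" and "b \<notin> Z"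
  shows "d_separated (reverse_on E S nx) a b Z \<longleftrightarrow> d_separated E a b Z"
proof -
  have "(\<exists>h. active_reach (reverse_on E S nx) Z a b h) \<longleftrightarrow> (\<exists>h. active_reach E Z a b h)"
    using active_reach_reverse_on[OF cyc irrefl _ \<open>b \<notin> Z\<close>]
      active_reach_reverse_on[OF cycle_on_reverse_on[OF cyc] reverse_on_irrefl[OF cyc irrefl] _ \<open>b \<notin> Z\<close>]
    unfolding reverse_on_reverse_on[OF cyc irrefl] by blast
  then show ?thesis
    using d_separated_iff_not_active_reach[OF \<open>a \<noteq> b\<close> \<open>a \<notin> Z\<close>] by blast
qed

theorem mainTheorem11:
  fixes V :: "'a set" and E :: "('a \<times> 'a) set" and C :: "'a list"
  assumes "dcg V E" and "is_cycle V E C"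
  shows "markov_equivalent V E (reverse_cycle E C)"
proof -
  have cyc: "cycle_on E (set C) (cycle_succ C) (cycle_pred C)"
    using assms(2) by (rule is_cycle_cycle_on)
  have irrefl: "\<forall>v. (v, v) \<notin> E"
    using assms(1) by (simp add: dcg_def)
  show ?thesis
    unfolding markov_equivalent_def reverse_cycle_eq_reverse_on[OF assms(2)]
    using d_separated_reverse_on[OF cyc irrefl] by auto
qed

end
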